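(* For all $n\ge 1$, $$\sum_{\pi\in\mathcal D_n}t^{\mathsf{cyc}_D^+(\pi)}=t\prod_{i=2}^n(t+2i-1)\qquad\text{and}\qquad\sum_{\pi\in\mathcal D_n}t^{\tilde\ell'_D(\pi)}=\prod_{i=2}^n\bigl(1+(2i-1)t\bigr).$$
   Context: Signed permutations of $[n]$ are words $\pi=\pi_1\cdots\pi_n$ where $|\pi_1|\cdots|\pi_n|$ is a permutation $\sigma$ of $[n]$ and each letter may carry a bar ($\bar i=-i$); this is $\mathsf{G}_{2,n}=C_2\wr\mathfrak S_n$ with color $1$ meaning barred. $\mathcal D_n$ is the subgroup of signed permutations having an even number of barred letters. For $1\le|i|<j\le n$, $t^D_{ij}$ is the element such that $\pi\cdot t^D_{ij}$ (for $i>0$) swaps the letters in positions $i$ and $j$, and (for $i<0$) puts in position $j$ the letter from position $|i|$ with its sign changed and in position $|i|$ the letter from position $j$ with its sign changed; for $1<i\le n$, $t^D_{\bar i i}$ is the element such that $\pi\cdot t^D_{\bar ii}$ changes the signs of the letters in positions $1$ and $i$. $\tilde\ell'_D(\pi)$ is the minimal number of factors needed to write $\pi$ as a product of elements of $\mathcal T^D_n=\{t^D_{ij}:1\le|i|<j\le n\}\cup\{t^D_{\bar ii}:1<i\le n\}$. $\mathsf{Cyc}^0(\pi)$ is the set of minima of those cycles of $\sigma$ containing an even number of positions $k$ with $\pi_k$ barred; $\mathsf{cyc}^+_D(\pi)=|\mathsf{Cyc}^0(\pi)\cup\{1\}|$. *)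

theory Defs
  imports Main
begin

text \<open>A signed permutation of [n] is represented as a word \<pi> :: nat \<Rightarrow> int,
  \<pi> k being the letter in position k (1 \<le> k \<le> n); barred letters are negative;
  outside positions 1..n the function is 0 (canonical representation).\<close>

definition signed_perms :: "nat \<Rightarrow> (nat \<Rightarrow> int) set" where
  "signed_perms n = {\<pi>. bij_betw (\<lambda>k. nat \<bar>\<pi> k\<bar>) {1..n} {1..n} \<and>
                       (\<forall>k. k \<notin> {1..n} \<longrightarrow> \<pi> k = 0)}"

definition barred_positions :: "nat \<Rightarrow> (nat \<Rightarrow> int) \<Rightarrow> nat set" where
  "barred_positions n \<pi> = {k \<in> {1..n}. \<pi> k < 0}"

definition Dn :: "nat \<Rightarrow> (nat \<Rightarrow> int) set" where
  "Dn n = {\<pi> \<in> signed_perms n. even (card (barred_positions n \<pi>))}"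

definition sp_id :: "nat \<Rightarrow> nat \<Rightarrow> int" where
  "sp_id n k = (if k \<in> {1..n} then int k else 0)"

definition sp_mult :: "nat \<Rightarrow> (nat \<Rightarrow> int) \<Rightarrow> (nat \<Rightarrow> int) \<Rightarrow> nat \<Rightarrow> int" where
  "sp_mult n \<pi> \<tau> k = (if k \<in> {1..n} then sgn (\<tau> k) * \<pi> (nat \<bar>\<tau> k\<bar>) else 0)"

definition tD_pos :: "nat \<Rightarrow> nat \<Rightarrow> nat \<Rightarrow> nat \<Rightarrow> int" where
  "tD_pos n i j k = (if k \<in> {1..n} then
      (if k = i then int j else if k = j then int i else int k) else 0)"

text \<open>t^D_{\<bar>i j} (i.e. negative first index -i): position j gets the negated letter
  from position i and position i gets the negated letter from position j.\<close>
definition tD_neg :: "nat \<Rightarrow> nat \<Rightarrow> nat \<Rightarrow> nat \<Rightarrow> int" where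
  "tD_neg n i j k = (if k \<in> {1..n} then
      (if k = i then - int j else if k = j then - int i else int k) else 0)"

text \<open>t^D_{\<bar>i i}: changes the signs of the letters in positions 1 and i.\<close>
definition tD_bar :: "nat \<Rightarrow> nat \<Rightarrow> nat \<Rightarrow> int" where
  "tD_bar n i k = (if k \<in> {1..n} then
      (if k = 1 then -1 else if k = i then - int i else int k) else 0)"

definition TD :: "nat \<Rightarrow> (nat \<Rightarrow> int) set" where
  "TD n = {tD_pos n i j | i j. 1 \<le> i \<and> i < j \<and> j \<le> n}
        \<union> {tD_neg n i j | i j. 1 \<le> i \<and> i < j \<and> j \<le> n}
        \<union> {tD_bar n i | i. 1 < i \<and> i \<le> n}"

definition lenD :: "nat \<Rightarrow> (nat \<Rightarrow> int) \<Rightarrow> nat" where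
  "lenD n \<pi> = (LEAST m. \<exists>ws. length ws = m \<and> set ws \<subseteq> TD n \<and>
                              foldl (sp_mult n) (sp_id n) ws = \<pi>)"

definition sp_abs :: "(nat \<Rightarrow> int) \<Rightarrow> nat \<Rightarrow> nat" where
  "sp_abs \<pi> k = nat \<bar>\<pi> k\<bar>"

definition sp_cycle :: "(nat \<Rightarrow> int) \<Rightarrow> nat \<Rightarrow> nat set" where
  "sp_cycle \<pi> k = {(sp_abs \<pi> ^^ m) k | m. True}"

definition Cyc0 :: "nat \<Rightarrow> (nat \<Rightarrow> int) \<Rightarrow> nat set" where
  "Cyc0 n \<pi> = {k \<in> {1..n}. k = Min (sp_cycle \<pi> k) \<and>
                 even (card {j \<in> sp_cycle \<pi> k. \<pi> j < 0})}"

definition cycD_plus :: "nat \<Rightarrow> (nat \<Rightarrow> int) \<Rightarrow> nat" where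
  "cycD_plus n \<pi> = card (Cyc0 n \<pi> \<union> {1})"

end

theory Submission
  imports Defs "HOL-Combinatorics.Transposition"
begin

text \<open>Call a cycle of the underlying permutation \<open>|\<pi>|\<close> counted if it carries an even
  number of bars or contains \<open>1\<close>; then \<open>cyc\<^sup>+\<^sub>D(\<pi>)\<close> is the number of counted cycles.
  Right multiplication by a generator either composes \<open>|\<pi>|\<close> with a transposition, which splits
  one cycle or joins two and leaves the others alone, or only negates two letters, one of them in
  position \<open>1\<close>. As two counted cycles join to a counted one, the number of counted cycles drops
  by at most one in each step, whence \<open>\<ell>'\<^sub>D(\<pi>) \<ge> n - cyc\<^sup>+\<^sub>D(\<pi>)\<close>.

  Conversely, every element of \<open>D\<^sub>n\<^sub>+\<^sub>1\<close> arises in exactly one way from some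
  \<open>\<sigma> \<in> D\<^sub>n\<close> by inserting the letter \<open>n + 1\<close> in one of \<open>2(n + 1)\<close> ways: leaving it
  fixed adds the counted cycle \<open>{n + 1}\<close>, while each of the other \<open>2n + 1\<close> ways costs one
  generator and keeps the number of counted cycles. Induction on \<open>n\<close> therefore yields words of
  length \<open>n - cyc\<^sup>+\<^sub>D(\<pi>)\<close>, so the bound is attained, and the generating function
  \<open>\<Sum>\<^sub>\<pi> a ^ cyc\<^sup>+\<^sub>D(\<pi>) * b ^ (n - cyc\<^sup>+\<^sub>D(\<pi>)) = a * \<Prod>\<^sub>i\<^sub>=\<^sub>2\<^sub>.\<^sub>.\<^sub>n (a + (2i - 1) b)\<close>,
  whose specialisations \<open>b = 1\<close> and \<open>a = 1\<close> are the two identities.\<close>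

section \<open>Orbits of a bijection of a finite set\<close>

definition iter_orbit :: "('a \<Rightarrow> 'a) \<Rightarrow> 'a \<Rightarrow> 'a set" where
  "iter_orbit f x = {(f ^^ m) x | m. True}"

lemma iter_orbit_self: "x \<in> iter_orbit f x"
  unfolding iter_orbit_def by (auto intro: exI[of _ 0])

lemma iter_orbit_closed: "y \<in> iter_orbit f x \<Longrightarrow> f y \<in> iter_orbit f x"
  unfolding iter_orbit_def by (auto intro: exI[of _ "Suc _"])

lemma iter_orbit_least:
  assumes "x \<in> S" "\<And>y. y \<in> S \<Longrightarrow> f y \<in> S"
  shows "iter_orbit f x \<subseteq> S"
proof -
  have "(f ^^ m) x \<in> S" for m by (induction m) (auto simp: assms)
  then show ?thesis unfolding iter_orbit_def by auto
qed

lemma iter_orbit_subsetI: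
  assumes "x \<in> S" "\<And>y. y \<in> S \<Longrightarrow> y \<in> iter_orbit f x \<Longrightarrow> f y \<in> S"
  shows "iter_orbit f x \<subseteq> S"
proof -
  have "iter_orbit f x \<subseteq> S \<inter> iter_orbit f x"
    by (rule iter_orbit_least) (use assms iter_orbit_self iter_orbit_closed in auto)
  then show ?thesis by blast
qed

lemma iter_orbit_mono: "y \<in> iter_orbit f x \<Longrightarrow> iter_orbit f y \<subseteq> iter_orbit f x"
  by (rule iter_orbit_least) (auto intro: iter_orbit_closed)

lemma iter_orbit_subset: "f ` A \<subseteq> A \<Longrightarrow> x \<in> A \<Longrightarrow> iter_orbit f x \<subseteq> A"
  by (rule iter_orbit_least) auto

lemma iter_orbit_cong:
  assumes "\<And>y. y \<in> iter_orbit f x \<Longrightarrow> g y = f y"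
  shows "iter_orbit g x = iter_orbit f x"
proof -
  have "(g ^^ m) x = (f ^^ m) x" for m
  proof (induction m)
    case (Suc m)
    have "(f ^^ m) x \<in> iter_orbit f x" unfolding iter_orbit_def by auto
    then show ?case using Suc assms by simp
  qed simp
  then show ?thesis unfolding iter_orbit_def by auto
qed

text \<open>Pigeonhole: two of the points \<open>(f ^^ m) x\<close>, \<open>m \<le> card A\<close>, coincide, and injectivity
  cancels the smaller exponent.\<close>

lemma funpow_period:
  assumes f: "bij_betw f A A" and "finite A" "x \<in> A"
  obtains p where "p > 0" "(f ^^ p) x = x"
proof -
  have in_A: "(f ^^ m) x \<in> A" for m
    using bij_betw_funpow[OF f] \<open>x \<in> A\<close> by (blast dest: bij_betwE)
  have "\<not> inj_on (\<lambda>m. (f ^^ m) x) {0..card A}"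
  proof
    assume "inj_on (\<lambda>m. (f ^^ m) x) {0..card A}"
    then have "card {0..card A} \<le> card A"
      using card_inj_on_le[of _ "{0..card A}" A] in_A \<open>finite A\<close> by auto
    then show False by simp
  qed
  then obtain a b where "a < b" "(f ^^ a) x = (f ^^ b) x"
    unfolding inj_on_def by (metis linorder_neqE_nat)
  moreover have "(f ^^ b) x = (f ^^ a) ((f ^^ (b - a)) x)"
    using \<open>a < b\<close> by (simp flip: funpow_add[unfolded comp_def, THEN fun_cong])
  moreover have "inj_on (f ^^ a) A" using bij_betw_funpow[OF f] bij_betw_def by blast
  ultimately have "(f ^^ (b - a)) x = x" using inj_onD in_A \<open>x \<in> A\<close> by metis
  with \<open>a < b\<close> show thesis by (intro that[of "b - a"]) auto
qed

lemma iter_orbit_sym: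
  assumes "bij_betw f A A" "finite A" "x \<in> A" "y \<in> iter_orbit f x"
  shows "x \<in> iter_orbit f y"
proof -
  obtain p where p: "p > 0" "(f ^^ p) x = x" using funpow_period[OF assms(1-3)] .
  obtain m where "y = (f ^^ m) x" using assms(4) unfolding iter_orbit_def by auto
  then have y: "y = (f ^^ (m mod p)) x" using funpow_mod_eq[where f=f and n=p and x=x and m=m] p by simp
  have "(f ^^ (p - m mod p)) y = (f ^^ p) x"
    unfolding y using p(1) by (simp flip: funpow_add[unfolded comp_def, THEN fun_cong])
  then show ?thesis using p unfolding iter_orbit_def by auto
qed

lemma iter_orbit_eq:
  assumes "bij_betw f A A" "finite A" "x \<in> A" "y \<in> iter_orbit f x"
  shows "iter_orbit f y = iter_orbit f x"
  using iter_orbit_mono[OF assms(4)] iter_orbit_mono[OF iter_orbit_sym[OF assms]] by blast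

lemma iter_orbit_disjoint:
  assumes "bij_betw f A A" "finite A" "i \<in> A" "j \<in> A" "j \<notin> iter_orbit f i"
  shows "iter_orbit f i \<inter> iter_orbit f j = {}"
proof (rule ccontr)
  assume "iter_orbit f i \<inter> iter_orbit f j \<noteq> {}"
  then obtain y where "y \<in> iter_orbit f i" "y \<in> iter_orbit f j" by blast
  then have "iter_orbit f i = iter_orbit f j"
    using iter_orbit_eq[OF assms(1,2)] assms(3,4) by metis
  then show False using assms(5) iter_orbit_self by metis
qed

lemma iter_orbit_comp_transpose_other:
  "i \<notin> iter_orbit f x \<Longrightarrow> j \<notin> iter_orbit f x \<Longrightarrow> iter_orbit (f \<circ> transpose i j) x = iter_orbit f x"
  by (rule iter_orbit_cong) (auto simp: transpose_def)

lemma iter_orbit_comp_transpose_join: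
  assumes f: "bij_betw f A A" "finite A" and ij: "i \<in> A" "j \<in> A" "j \<notin> iter_orbit f i"
  shows "iter_orbit (f \<circ> transpose i j) i = iter_orbit f i \<union> iter_orbit f j"
proof -
  let ?g = "f \<circ> transpose i j"
  let ?T = "iter_orbit ?g i"
  have g_other: "?g y = f y" if "y \<noteq> i" "y \<noteq> j" for y using that by simp
  have T_closed: "?g y \<in> ?T" if "y \<in> ?T" for y using iter_orbit_closed[OF that] .
  have i_notin: "i \<notin> iter_orbit f j" using iter_orbit_sym[OF f ij(2)] ij(3) by blast
  have fj_T: "f j \<in> ?T" using T_closed[OF iter_orbit_self] by simp
  have fj: "iter_orbit f (f j) = iter_orbit f j"
    by (rule iter_orbit_eq[OF f ij(2)]) (rule iter_orbit_closed[OF iter_orbit_self])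
  have "iter_orbit f (f j) \<subseteq> ?T"
  proof (rule iter_orbit_subsetI[OF fj_T])
    fix y assume y: "y \<in> ?T" "y \<in> iter_orbit f (f j)"
    then have "y \<noteq> i" using i_notin fj by blast
    then show "f y \<in> ?T"
      using fj_T T_closed[OF y(1)] g_other[of y] by (cases "y = j") simp_all
  qed
  with fj have Tj: "iter_orbit f j \<subseteq> ?T" by simp
  have "iter_orbit f i \<subseteq> ?T"
  proof (rule iter_orbit_subsetI[OF iter_orbit_self])
    fix y assume y: "y \<in> ?T" "y \<in> iter_orbit f i"
    then have "y \<noteq> j" using ij(3) by auto
    have "?g j \<in> ?T" using T_closed[OF subsetD[OF Tj iter_orbit_self]] .
    then show "f y \<in> ?T"
      using T_closed[OF y(1)] g_other[of y] \<open>y \<noteq> j\<close> by (cases "y = i") simp_all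
  qed
  moreover have "?T \<subseteq> iter_orbit f i \<union> iter_orbit f j"
  proof (rule iter_orbit_least)
    fix y assume "y \<in> iter_orbit f i \<union> iter_orbit f j"
    then show "?g y \<in> iter_orbit f i \<union> iter_orbit f j"
      using iter_orbit_closed[of y f] iter_orbit_closed[OF iter_orbit_self, of f i]
        iter_orbit_closed[OF iter_orbit_self, of f j] g_other[of y]
      by (cases "y = i \<or> y = j") auto
  qed (simp add: iter_orbit_self)
  ultimately show ?thesis using Tj by blast
qed

definition orbits :: "'a set \<Rightarrow> ('a \<Rightarrow> 'a) \<Rightarrow> 'a set set" where
  "orbits A f = iter_orbit f ` A"

lemma orbits_subset:
  assumes "f ` A \<subseteq> A" "C \<in> orbits A f"
  shows "C \<subseteq> A"
proof -
  obtain x where "x \<in> A" "C = iter_orbit f x" using assms(2) unfolding orbits_def by blast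
  then show ?thesis using iter_orbit_subset[OF assms(1)] by simp
qed

lemma notin_other_orbit:
  assumes f: "bij_betw f A A" "finite A" and C: "C \<in> orbits A f" "C \<noteq> iter_orbit f i"
  shows "i \<notin> C"
proof
  assume "i \<in> C"
  obtain x where x: "x \<in> A" "C = iter_orbit f x" using C(1) unfolding orbits_def by auto
  with \<open>i \<in> C\<close> have "iter_orbit f i = C" using iter_orbit_eq[OF f x(1), of i] by simp
  with C(2) show False by simp
qed

lemma orbits_comp_transpose_join:
  assumes f: "bij_betw f A A" "finite A" and ij: "i \<in> A" "j \<in> A" "j \<notin> iter_orbit f i"
  shows "orbits A (f \<circ> transpose i j)
    = insert (iter_orbit f i \<union> iter_orbit f j) (orbits A f - {iter_orbit f i, iter_orbit f j})"
proof -
  let ?g = "f \<circ> transpose i j" and ?M = "iter_orbit f i \<union> iter_orbit f j"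
  have g: "bij_betw ?g A A" by (rule bij_betw_trans[OF _ f(1)]) (simp add: ij)
  have join: "iter_orbit ?g i = ?M" by (rule iter_orbit_comp_transpose_join[OF f ij])
  have in_M: "iter_orbit ?g x = ?M" if "x \<in> A" "x \<in> ?M" for x
    using iter_orbit_eq[OF g f(2) ij(1), of x] join that by argo
  have other: "iter_orbit ?g x = iter_orbit f x" if "x \<in> A" "x \<notin> ?M" for x
    using iter_orbit_sym[OF f that(1)] that(2) by (intro iter_orbit_comp_transpose_other) auto
  have rest: "iter_orbit f ` (A - ?M) = orbits A f - {iter_orbit f i, iter_orbit f j}"
  proof (intro equalityI subsetI)
    fix C assume "C \<in> iter_orbit f ` (A - ?M)"
    then obtain x where "x \<in> A" "x \<notin> ?M" "C = iter_orbit f x" by blast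
    then show "C \<in> orbits A f - {iter_orbit f i, iter_orbit f j}"
      using iter_orbit_self[of x f] unfolding orbits_def by auto
  next
    fix C assume C: "C \<in> orbits A f - {iter_orbit f i, iter_orbit f j}"
    then obtain x where x: "x \<in> A" "C = iter_orbit f x" unfolding orbits_def by blast
    have "x \<notin> ?M"
      using C x iter_orbit_eq[OF f ij(1), of x] iter_orbit_eq[OF f ij(2), of x] by auto
    with x show "C \<in> iter_orbit f ` (A - ?M)" by blast
  qed
  have "i \<in> A \<inter> ?M" using ij(1) iter_orbit_self[of i f] by simp
  then have image_M: "iter_orbit ?g ` (A \<inter> ?M) = {?M}"
    using in_M by blast
  have image_rest: "iter_orbit ?g ` (A - ?M) = iter_orbit f ` (A - ?M)"
    using other by (intro image_cong) blast+
  have "orbits A ?g = iter_orbit ?g ` (A \<inter> ?M) \<union> iter_orbit ?g ` (A - ?M)"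
    by (metis Int_Diff_Un image_Un orbits_def)
  also have "\<dots> = insert ?M (orbits A f - {iter_orbit f i, iter_orbit f j})"
    unfolding image_M image_rest rest by simp
  finally show ?thesis .
qed

lemma orbits_comp_transpose_split:
  assumes f: "bij_betw f A A" "finite A" and "i \<in> A" "j \<in> iter_orbit f i"
    and C: "C \<in> orbits A f" "C \<noteq> iter_orbit f i"
  shows "C \<in> orbits A (f \<circ> transpose i j)"
proof -
  obtain x where x: "x \<in> A" "C = iter_orbit f x" using C unfolding orbits_def by auto
  have "i \<notin> C" by (rule notin_other_orbit[OF f C])
  moreover have "j \<notin> C"
    using notin_other_orbit[OF f C(1), of j] iter_orbit_eq[OF f \<open>i \<in> A\<close> \<open>j \<in> iter_orbit f i\<close>] C(2)
    by simp
  ultimately have "iter_orbit (f \<circ> transpose i j) x = C"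
    using x iter_orbit_comp_transpose_other by metis
  then show ?thesis using x unfolding orbits_def by blast
qed

lemma orbits_Min:
  fixes f :: "'a::linorder \<Rightarrow> 'a"
  assumes f: "bij_betw f A A" "finite A" and C: "C \<in> orbits A f"
  shows "Min C \<in> C" "iter_orbit f (Min C) = C"
proof -
  obtain x where x: "x \<in> A" "C = iter_orbit f x" using C unfolding orbits_def by blast
  have "C \<subseteq> A" using iter_orbit_subset[of f A x] x bij_betw_imp_surj_on[OF f(1)] by simp
  then have "finite C" using f(2) finite_subset by blast
  moreover have "C \<noteq> {}" using x iter_orbit_self[of x f] by auto
  ultimately show "Min C \<in> C" by simp
  then show "iter_orbit f (Min C) = C" using iter_orbit_eq[OF f x(1)] x(2) by simp
qed

section \<open>Signed permutations and their counted cycles\<close>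

lemma signed_permsI:
  "bij_betw (sp_abs \<pi>) {1..n} {1..n} \<Longrightarrow> (\<And>k. k \<notin> {1..n} \<Longrightarrow> \<pi> k = 0) \<Longrightarrow> \<pi> \<in> signed_perms n"
  unfolding signed_perms_def sp_abs_def by simp

lemma signed_perms_bij: "\<pi> \<in> signed_perms n \<Longrightarrow> bij_betw (sp_abs \<pi>) {1..n} {1..n}"
  unfolding signed_perms_def sp_abs_def by simp

lemma signed_perms_outside: "\<pi> \<in> signed_perms n \<Longrightarrow> k \<notin> {1..n} \<Longrightarrow> \<pi> k = 0"
  unfolding signed_perms_def by simp

lemma signed_perms_abs_in: "\<pi> \<in> signed_perms n \<Longrightarrow> k \<in> {1..n} \<Longrightarrow> sp_abs \<pi> k \<in> {1..n}"
  using signed_perms_bij bij_betwE by blast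

lemma signed_perms_nonzero: "\<pi> \<in> signed_perms n \<Longrightarrow> k \<in> {1..n} \<Longrightarrow> \<pi> k \<noteq> 0"
  using signed_perms_abs_in[of \<pi> n k] by (auto simp: sp_abs_def)

lemma iter_orbit_sp_abs_subset:
  "\<pi> \<in> signed_perms n \<Longrightarrow> x \<in> {1..n} \<Longrightarrow> iter_orbit (sp_abs \<pi>) x \<subseteq> {1..n}"
  using iter_orbit_subset bij_betw_imp_surj_on[OF signed_perms_bij] by (metis order_refl)

lemma orbits_sp_abs_subset:
  "\<pi> \<in> signed_perms n \<Longrightarrow> C \<in> orbits {1..n} (sp_abs \<pi>) \<Longrightarrow> C \<subseteq> {1..n}"
  using orbits_subset bij_betw_imp_surj_on[OF signed_perms_bij] by (metis order_refl)

lemma sp_cycle_eq_iter_orbit: "sp_cycle \<pi> k = iter_orbit (sp_abs \<pi>) k"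
  unfolding sp_cycle_def iter_orbit_def ..

definition sign_prod :: "(nat \<Rightarrow> int) \<Rightarrow> nat set \<Rightarrow> int" where
  "sign_prod \<pi> C = (\<Prod>j\<in>C. sgn (\<pi> j))"

lemma sign_prod_cong: "(\<And>k. k \<in> C \<Longrightarrow> \<pi>' k = \<pi> k) \<Longrightarrow> sign_prod \<pi>' C = sign_prod \<pi> C"
  unfolding sign_prod_def by (rule prod.cong) auto

lemma sign_prod_eq_power:
  assumes "finite C" "\<forall>j\<in>C. \<pi> j \<noteq> 0"
  shows "sign_prod \<pi> C = (-1) ^ card {j\<in>C. \<pi> j < 0}"
  using assms
proof (induction C rule: finite_induct)
  case (insert x F)
  have "{j \<in> insert x F. \<pi> j < 0} = (if \<pi> x < 0 then insert x {j\<in>F. \<pi> j < 0} else {j\<in>F. \<pi> j < 0})"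
    by auto
  with insert show ?case by (auto simp: sign_prod_def sgn_if)
qed (simp add: sign_prod_def)

lemma sign_prod_eq_1_iff:
  assumes "finite C" "\<forall>j\<in>C. \<pi> j \<noteq> 0"
  shows "sign_prod \<pi> C = 1 \<longleftrightarrow> even (card {j\<in>C. \<pi> j < 0})"
  unfolding sign_prod_eq_power[OF assms] by (simp add: minus_one_power_iff)

lemma Dn_iff_sign_prod: "\<pi> \<in> Dn n \<longleftrightarrow> \<pi> \<in> signed_perms n \<and> sign_prod \<pi> {1..n} = 1"
  using sign_prod_eq_1_iff[of "{1..n}" \<pi>] signed_perms_nonzero[of \<pi> n]
  by (auto simp: Dn_def barred_positions_def)

lemma Dn_signed_perms: "\<pi> \<in> Dn n \<Longrightarrow> \<pi> \<in> signed_perms n"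
  by (simp add: Dn_iff_sign_prod)

definition counted_cycle :: "(nat \<Rightarrow> int) \<Rightarrow> nat set \<Rightarrow> bool" where
  "counted_cycle \<pi> C \<longleftrightarrow> sign_prod \<pi> C = 1 \<or> 1 \<in> C"

definition counted_cycles :: "nat \<Rightarrow> (nat \<Rightarrow> int) \<Rightarrow> nat set set" where
  "counted_cycles n \<pi> = {C \<in> orbits {1..n} (sp_abs \<pi>). counted_cycle \<pi> C}"

definition cyc_plus :: "nat \<Rightarrow> (nat \<Rightarrow> int) \<Rightarrow> nat" where
  "cyc_plus n \<pi> = card (counted_cycles n \<pi>)"

lemma counted_cycle_cong:
  "(\<And>k. k \<in> C \<Longrightarrow> \<pi>' k = \<pi> k) \<Longrightarrow> counted_cycle \<pi>' C = counted_cycle \<pi> C"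
  unfolding counted_cycle_def using sign_prod_cong by metis

lemma counted_cycle_union:
  assumes "finite A" "finite B" "A \<inter> B = {}" "counted_cycle \<pi> A" "counted_cycle \<pi> B"
  shows "counted_cycle \<pi> (A \<union> B)"
proof -
  have "sign_prod \<pi> (A \<union> B) = sign_prod \<pi> A * sign_prod \<pi> B"
    unfolding sign_prod_def by (rule prod.union_disjoint[OF assms(1-3)])
  with assms(4,5) show ?thesis unfolding counted_cycle_def by auto
qed

lemma finite_counted_cycles: "finite (counted_cycles n \<pi>)"
  unfolding counted_cycles_def orbits_def by simp

lemma cyc_plus_le: "cyc_plus n \<pi> \<le> n"
proof -
  have "cyc_plus n \<pi> \<le> card (orbits {1..n} (sp_abs \<pi>))"
    unfolding cyc_plus_def counted_cycles_def by (rule card_mono) (auto simp: orbits_def)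
  also have "\<dots> \<le> n" unfolding orbits_def using card_image_le[of "{1..n}"] by simp
  finally show ?thesis .
qed

lemma cycD_plus_eq_cyc_plus:
  assumes \<pi>: "\<pi> \<in> signed_perms n" and "1 \<le> n"
  shows "cycD_plus n \<pi> = cyc_plus n \<pi>"
proof -
  let ?f = "sp_abs \<pi>"
  have f: "bij_betw ?f {1..n} {1..n}" "finite {1..n}" using signed_perms_bij[OF \<pi>] by auto
  note sub = orbits_sp_abs_subset[OF \<pi>]
  have even_iff: "sign_prod \<pi> C = 1 \<longleftrightarrow> even (card {j \<in> C. \<pi> j < 0})"
    if "C \<in> orbits {1..n} ?f" for C
    using sub[OF that] finite_subset signed_perms_nonzero[OF \<pi>] by (intro sign_prod_eq_1_iff) auto
  have Min_1: "Min C = 1" if "C \<in> orbits {1..n} ?f" "1 \<in> C" for C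
  proof -
    have "finite C" using sub[OF that(1)] finite_subset by auto
    then have "Min C \<le> 1" using that(2) by simp
    moreover have "Min C \<ge> 1" using sub[OF that(1)] orbits_Min(1)[OF f that(1)] by auto
    ultimately show ?thesis by simp
  qed
  have "Cyc0 n \<pi> \<union> {1} = Min ` counted_cycles n \<pi>"
  proof (intro equalityI subsetI)
    fix k assume "k \<in> Cyc0 n \<pi> \<union> {1}"
    then have k: "k \<in> {1..n}" "k = Min (iter_orbit ?f k)"
        "even (card {j \<in> iter_orbit ?f k. \<pi> j < 0}) \<or> k = 1"
      using Min_1 \<open>1 \<le> n\<close> iter_orbit_self[of 1 ?f]
      unfolding Cyc0_def sp_cycle_eq_iter_orbit orbits_def by auto
    then have C: "iter_orbit ?f k \<in> orbits {1..n} ?f" unfolding orbits_def by blast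
    then have "counted_cycle \<pi> (iter_orbit ?f k)"
      using k(3) even_iff[OF C] iter_orbit_self[of k ?f] unfolding counted_cycle_def by auto
    with C k(2) show "k \<in> Min ` counted_cycles n \<pi>" unfolding counted_cycles_def by blast
  next
    fix k assume "k \<in> Min ` counted_cycles n \<pi>"
    then obtain C where C: "C \<in> orbits {1..n} ?f" "counted_cycle \<pi> C" "k = Min C"
      unfolding counted_cycles_def by blast
    note Min = orbits_Min[OF f C(1)]
    show "k \<in> Cyc0 n \<pi> \<union> {1}"
    proof (cases "1 \<in> C")
      case True
      then show ?thesis using Min_1[OF C(1)] C(3) by simp
    next
      case False
      then have "even (card {j \<in> C. \<pi> j < 0})" using C(2) even_iff[OF C(1)]
        unfolding counted_cycle_def by simp
      moreover have "k \<in> {1..n}" using Min(1) sub[OF C(1)] C(3) by blast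
      ultimately show ?thesis using Min(2) C(3) unfolding Cyc0_def sp_cycle_eq_iter_orbit by simp
    qed
  qed
  moreover have "inj_on Min (counted_cycles n \<pi>)"
  proof (rule inj_onI)
    fix C D assume "C \<in> counted_cycles n \<pi>" "D \<in> counted_cycles n \<pi>" "Min C = Min D"
    then show "C = D" using orbits_Min(2)[OF f, of C] orbits_Min(2)[OF f, of D]
      unfolding counted_cycles_def by (metis (no_types, lifting) mem_Collect_eq)
  qed
  ultimately show ?thesis unfolding cycD_plus_def cyc_plus_def by (simp add: card_image)
qed

section \<open>Right multiplication by reflections\<close>

lemma tD_pos_in_TD: "1 \<le> i \<Longrightarrow> i < j \<Longrightarrow> j \<le> n \<Longrightarrow> tD_pos n i j \<in> TD n"
  unfolding TD_def by blast

lemma tD_neg_in_TD: "1 \<le> i \<Longrightarrow> i < j \<Longrightarrow> j \<le> n \<Longrightarrow> tD_neg n i j \<in> TD n"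
  unfolding TD_def by blast

lemma tD_bar_in_TD: "1 < i \<Longrightarrow> i \<le> n \<Longrightarrow> tD_bar n i \<in> TD n"
  unfolding TD_def by blast

text \<open>The factor \<open>1\<close> makes both kinds of transposition instances of
  \<open>\<pi>(i := e * \<pi> j, j := e * \<pi> i)\<close> with \<open>\<bar>e\<bar> = 1\<close>.\<close>

lemma sp_mult_tD_pos:
  assumes "\<pi> \<in> signed_perms n" "1 \<le> i" "i < j" "j \<le> n"
  shows "sp_mult n \<pi> (tD_pos n i j) = \<pi>(i := 1 * \<pi> j, j := 1 * \<pi> i)"
  using assms signed_perms_outside[OF assms(1)] by (auto simp: sp_mult_def tD_pos_def fun_eq_iff)

lemma sp_mult_tD_neg:
  assumes "\<pi> \<in> signed_perms n" "1 \<le> i" "i < j" "j \<le> n"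
  shows "sp_mult n \<pi> (tD_neg n i j) = \<pi>(i := - 1 * \<pi> j, j := - 1 * \<pi> i)"
  using assms signed_perms_outside[OF assms(1)] by (auto simp: sp_mult_def tD_neg_def fun_eq_iff)

lemma sp_mult_tD_bar:
  assumes "\<pi> \<in> signed_perms n" "1 < i" "i \<le> n"
  shows "sp_mult n \<pi> (tD_bar n i) = \<pi>(1 := - \<pi> 1, i := - \<pi> i)"
  using assms signed_perms_outside[OF assms(1)] by (auto simp: sp_mult_def tD_bar_def fun_eq_iff)

lemma sp_mult_sp_id: "\<pi> \<in> signed_perms n \<Longrightarrow> sp_mult n \<pi> (sp_id n) = \<pi>"
  using signed_perms_outside by (auto simp: sp_mult_def sp_id_def fun_eq_iff)

lemma sp_mult_TD_cases:
  assumes "\<pi> \<in> signed_perms n" "g \<in> TD n"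
  obtains (swap) i j e where "1 \<le> i" "i < j" "j \<le> n" "\<bar>e\<bar> = 1"
      "sp_mult n \<pi> g = \<pi>(i := e * \<pi> j, j := e * \<pi> i)"
    | (flip) i where "1 < i" "i \<le> n" "sp_mult n \<pi> g = \<pi>(1 := - \<pi> 1, i := - \<pi> i)"
  using assms(2) unfolding TD_def
proof (elim UnE CollectE exE conjE)
  fix i j assume "g = tD_pos n i j" "1 \<le> i" "i < j" "j \<le> n"
  then show thesis using swap[of i j 1] sp_mult_tD_pos[OF assms(1)] by simp
next
  fix i j assume "g = tD_neg n i j" "1 \<le> i" "i < j" "j \<le> n"
  then show thesis using swap[of i j "-1"] sp_mult_tD_neg[OF assms(1)] by simp
next
  fix i assume "g = tD_bar n i" "1 < i" "i \<le> n"
  then show thesis using flip sp_mult_tD_bar[OF assms(1)] by simp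
qed

lemma sp_abs_swap:
  assumes "\<bar>e\<bar> = 1"
  shows "sp_abs (\<pi>(i := e * \<pi> j, j := e * \<pi> i)) = sp_abs \<pi> \<circ> transpose i j"
  using assms by (auto simp: sp_abs_def transpose_def fun_eq_iff abs_mult)

lemma sp_abs_flip: "sp_abs (\<pi>(a := - \<pi> a, b := - \<pi> b)) = sp_abs \<pi>"
  by (auto simp: sp_abs_def fun_eq_iff)

lemma sign_prod_swap:
  assumes "finite M" "i \<in> M" "j \<in> M" "i \<noteq> j" "\<bar>e\<bar> = 1"
  shows "sign_prod (\<pi>(i := e * \<pi> j, j := e * \<pi> i)) M = sign_prod \<pi> M"
proof -
  have e: "sgn e * sgn e = 1" using assms(5) by (auto simp: sgn_if)
  have M: "M = insert i (insert j (M - {i, j}))" using assms(2,3) by blast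
  show ?thesis
    by (subst (1 2) M) (use assms(1,4) e in \<open>auto simp: sign_prod_def sgn_mult algebra_simps
        intro!: prod.cong\<close>)
qed

lemma sign_prod_flip:
  assumes "finite M" "a \<in> M" "b \<in> M" "a \<noteq> b"
  shows "sign_prod (\<pi>(a := - \<pi> a, b := - \<pi> b)) M = sign_prod \<pi> M"
proof -
  have M: "M = insert a (insert b (M - {a, b}))" using assms(2,3) by blast
  show ?thesis
    by (subst (1 2) M) (use assms(1,4) in \<open>auto simp: sign_prod_def intro!: prod.cong\<close>)
qed

lemma signed_perms_swap:
  assumes \<pi>: "\<pi> \<in> signed_perms n" and "i \<in> {1..n}" "j \<in> {1..n}" "\<bar>e\<bar> = 1"
  shows "\<pi>(i := e * \<pi> j, j := e * \<pi> i) \<in> signed_perms n"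
proof (rule signed_permsI)
  show "bij_betw (sp_abs (\<pi>(i := e * \<pi> j, j := e * \<pi> i))) {1..n} {1..n}"
    unfolding sp_abs_swap[OF assms(4)]
    by (rule bij_betw_trans[OF _ signed_perms_bij[OF \<pi>]], rule bij_betw_transpose_iff)
      (use assms(2,3) in blast)
qed (use assms signed_perms_outside[OF \<pi>] in auto)

lemma signed_perms_flip:
  assumes \<pi>: "\<pi> \<in> signed_perms n" and "a \<in> {1..n}" "b \<in> {1..n}"
  shows "\<pi>(a := - \<pi> a, b := - \<pi> b) \<in> signed_perms n"
  by (rule signed_permsI) (use assms signed_perms_outside[OF \<pi>] signed_perms_bij[OF \<pi>] in
      \<open>auto simp: sp_abs_flip\<close>)

lemma Dn_swap:
  assumes "\<pi> \<in> Dn n" "i \<in> {1..n}" "j \<in> {1..n}" "i \<noteq> j" "\<bar>e\<bar> = 1"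
  shows "\<pi>(i := e * \<pi> j, j := e * \<pi> i) \<in> Dn n"
  using assms signed_perms_swap sign_prod_swap[of "{1..n}" i j e \<pi>] by (simp add: Dn_iff_sign_prod)

lemma Dn_flip:
  assumes "\<pi> \<in> Dn n" "a \<in> {1..n}" "b \<in> {1..n}" "a \<noteq> b"
  shows "\<pi>(a := - \<pi> a, b := - \<pi> b) \<in> Dn n"
  using assms signed_perms_flip sign_prod_flip[of "{1..n}" a b \<pi>] by (simp add: Dn_iff_sign_prod)

lemma sp_mult_TD_Dn:
  assumes "\<pi> \<in> Dn n" "g \<in> TD n"
  shows "sp_mult n \<pi> g \<in> Dn n"
proof -
  have \<pi>: "\<pi> \<in> signed_perms n" using assms(1) by (rule Dn_signed_perms)
  show ?thesis
  proof (cases rule: sp_mult_TD_cases[OF \<pi> assms(2), case_names swap flip])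
    case (swap i j e) then show ?thesis using Dn_swap[OF assms(1)] by simp
  next
    case (flip i) then show ?thesis using Dn_flip[OF assms(1)] by simp
  qed
qed

lemma sp_mult_TD_involutive:
  assumes x: "x \<in> signed_perms n" and "g \<in> TD n"
  shows "sp_mult n (sp_mult n x g) g = x"
  using assms(2) unfolding TD_def
proof (elim UnE CollectE exE conjE)
  fix i j assume g: "g = tD_pos n i j" and ij: "1 \<le> i" "i < j" "j \<le> n"
  have "sp_mult n x g \<in> signed_perms n"
    using sp_mult_tD_pos[OF x ij] signed_perms_swap[OF x, of i j 1] ij g by simp
  then show ?thesis using sp_mult_tD_pos[OF x ij] sp_mult_tD_pos[OF _ ij] g ij by auto
next
  fix i j assume g: "g = tD_neg n i j" and ij: "1 \<le> i" "i < j" "j \<le> n"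
  have "sp_mult n x g \<in> signed_perms n"
    using sp_mult_tD_neg[OF x ij] signed_perms_swap[OF x, of i j "-1"] ij g by simp
  then show ?thesis using sp_mult_tD_neg[OF x ij] sp_mult_tD_neg[OF _ ij] g ij by auto
next
  fix i assume g: "g = tD_bar n i" and i: "1 < i" "i \<le> n"
  have "sp_mult n x g \<in> signed_perms n"
    using sp_mult_tD_bar[OF x i] signed_perms_flip[OF x, of 1 i] i g by simp
  then show ?thesis using sp_mult_tD_bar[OF x i] sp_mult_tD_bar[OF _ i] g i by auto
qed

lemma sp_id_Dn: "sp_id n \<in> Dn n"
proof -
  have "bij_betw (sp_abs (sp_id n)) {1..n} {1..n}"
    by (rule bij_betw_byWitness[where f'=id]) (auto simp: sp_abs_def sp_id_def)
  then have "sp_id n \<in> signed_perms n" by (rule signed_permsI) (simp add: sp_id_def)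
  moreover have "sign_prod (sp_id n) {1..n} = 1" by (simp add: sign_prod_def sp_id_def)
  ultimately show ?thesis by (simp add: Dn_iff_sign_prod)
qed

lemma Dn_1: "Dn 1 = {sp_id 1}"
proof (intro equalityI subsetI)
  fix \<pi> assume "\<pi> \<in> Dn 1"
  then have \<pi>: "\<pi> \<in> signed_perms 1" "sgn (\<pi> 1) = 1" by (auto simp: Dn_iff_sign_prod sign_prod_def)
  moreover have "nat \<bar>\<pi> 1\<bar> = 1" using signed_perms_abs_in[OF \<pi>(1), of 1] by (simp add: sp_abs_def)
  ultimately have "\<pi> 1 = 1" by (simp add: sgn_if split: if_splits)
  then show "\<pi> \<in> {sp_id 1}" using signed_perms_outside[OF \<pi>(1)] by (auto simp: sp_id_def fun_eq_iff)
qed (simp add: sp_id_Dn)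

lemma TD_Dn:
  assumes "g \<in> TD n"
  shows "g \<in> Dn n"
  using assms unfolding TD_def
proof (elim UnE CollectE exE conjE)
  fix i j assume "g = tD_pos n i j" "1 \<le> i" "i < j" "j \<le> n"
  moreover have "tD_pos n i j = (sp_id n)(i := 1 * sp_id n j, j := 1 * sp_id n i)"
    using \<open>1 \<le> i\<close> \<open>i < j\<close> \<open>j \<le> n\<close> by (auto simp: tD_pos_def sp_id_def fun_eq_iff)
  ultimately show ?thesis using Dn_swap[OF sp_id_Dn, of i n j 1] by simp
next
  fix i j assume "g = tD_neg n i j" "1 \<le> i" "i < j" "j \<le> n"
  moreover have "tD_neg n i j = (sp_id n)(i := - 1 * sp_id n j, j := - 1 * sp_id n i)"
    using \<open>1 \<le> i\<close> \<open>i < j\<close> \<open>j \<le> n\<close> by (auto simp: tD_neg_def sp_id_def fun_eq_iff)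
  ultimately show ?thesis using Dn_swap[OF sp_id_Dn, of i n j "-1"] by simp
next
  fix i assume "g = tD_bar n i" "1 < i" "i \<le> n"
  moreover have "tD_bar n i = (sp_id n)(1 := - sp_id n 1, i := - sp_id n i)"
    using \<open>1 < i\<close> \<open>i \<le> n\<close> by (auto simp: tD_bar_def sp_id_def fun_eq_iff)
  ultimately show ?thesis using Dn_flip[OF sp_id_Dn, of 1 n i] by simp
qed

lemma word_product_Dn: "set ws \<subseteq> TD n \<Longrightarrow> foldl (sp_mult n) (sp_id n) ws \<in> Dn n"
  by (induction ws rule: rev_induct) (simp_all add: sp_id_Dn sp_mult_TD_Dn)

section \<open>A lower bound for the reflection length\<close>

lemma card_Collect_insert:
  assumes "finite R" "x \<notin> R"
  shows "card {C \<in> insert x R. P C} = of_bool (P x) + card {C \<in> R. P C}"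
proof (cases "P x")
  case True
  then have "{C \<in> insert x R. P C} = insert x {C \<in> R. P C}" by auto
  with True assms show ?thesis by simp
next
  case False
  then have "{C \<in> insert x R. P C} = {C \<in> R. P C}" by auto
  with False show ?thesis by simp
qed

lemma cyc_plus_le_Suc:
  assumes "counted_cycles n \<pi> - {D} \<subseteq> counted_cycles n \<pi>'"
  shows "cyc_plus n \<pi> \<le> Suc (cyc_plus n \<pi>')"
proof -
  have "cyc_plus n \<pi> \<le> Suc (card (counted_cycles n \<pi> - {D}))"
    unfolding cyc_plus_def
    by (cases "D \<in> counted_cycles n \<pi>") (simp_all add: card_Suc_Diff1 finite_counted_cycles)
  also have "card (counted_cycles n \<pi> - {D}) \<le> cyc_plus n \<pi>'"
    unfolding cyc_plus_def by (rule card_mono[OF finite_counted_cycles assms])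
  finally show ?thesis by simp
qed

lemma cyc_plus_swap_same_cycle:
  assumes \<pi>: "\<pi> \<in> signed_perms n" and ij: "i \<in> {1..n}" "j \<in> iter_orbit (sp_abs \<pi>) i"
    and e: "\<bar>e\<bar> = 1"
  shows "cyc_plus n \<pi> \<le> Suc (cyc_plus n (\<pi>(i := e * \<pi> j, j := e * \<pi> i)))"
proof (rule cyc_plus_le_Suc[of _ _ "iter_orbit (sp_abs \<pi>) i"], rule subsetI)
  let ?f = "sp_abs \<pi>" and ?\<pi>' = "\<pi>(i := e * \<pi> j, j := e * \<pi> i)"
  have f: "bij_betw ?f {1..n} {1..n}" "finite {1..n}" using signed_perms_bij[OF \<pi>] by auto
  fix C assume C: "C \<in> counted_cycles n \<pi> - {iter_orbit ?f i}"
  then have C': "C \<in> orbits {1..n} ?f" "C \<noteq> iter_orbit ?f i" "counted_cycle \<pi> C"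
    unfolding counted_cycles_def by auto
  have "i \<notin> C" by (rule notin_other_orbit[OF f C'(1,2)])
  moreover have "j \<notin> C"
    using notin_other_orbit[OF f C'(1), of j] iter_orbit_eq[OF f ij] C'(2) by simp
  ultimately have "counted_cycle ?\<pi>' C" using C'(3) by (subst counted_cycle_cong) auto
  moreover have "C \<in> orbits {1..n} (sp_abs ?\<pi>')"
    unfolding sp_abs_swap[OF e] by (rule orbits_comp_transpose_split[OF f ij C'(1,2)])
  ultimately show "C \<in> counted_cycles n ?\<pi>'" unfolding counted_cycles_def by blast
qed

lemma cyc_plus_swap_join:
  assumes \<pi>: "\<pi> \<in> signed_perms n" and ij: "i \<in> {1..n}" "j \<in> {1..n}" "j \<notin> iter_orbit (sp_abs \<pi>) i"
    and e: "\<bar>e\<bar> = 1"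
  shows "cyc_plus n (\<pi>(i := e * \<pi> j, j := e * \<pi> i))
      + of_bool (counted_cycle \<pi> (iter_orbit (sp_abs \<pi>) i))
      + of_bool (counted_cycle \<pi> (iter_orbit (sp_abs \<pi>) j))
    = cyc_plus n \<pi> + of_bool (counted_cycle \<pi> (iter_orbit (sp_abs \<pi>) i \<union> iter_orbit (sp_abs \<pi>) j))"
proof -
  let ?f = "sp_abs \<pi>" and ?\<pi>' = "\<pi>(i := e * \<pi> j, j := e * \<pi> i)"
  let ?Oi = "iter_orbit ?f i" and ?Oj = "iter_orbit ?f j"
  define R where "R = orbits {1..n} ?f - {?Oi, ?Oj}"
  have f: "bij_betw ?f {1..n} {1..n}" "finite {1..n}" using signed_perms_bij[OF \<pi>] by auto
  have finR: "finite R" unfolding R_def orbits_def by simp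
  have R_avoid: "i \<notin> C" "j \<notin> C" if "C \<in> R" for C
    using notin_other_orbit[OF f, of C i] notin_other_orbit[OF f, of C j] that unfolding R_def by auto
  have "i \<noteq> j" using ij(3) iter_orbit_self[of i ?f] by blast
  have Oi_Oj: "?Oi \<noteq> ?Oj" using ij(3) iter_orbit_self[of j ?f] by auto
  have M_notin: "?Oi \<union> ?Oj \<notin> R" using R_avoid(1) iter_orbit_self[of i ?f] by blast
  have orbits': "orbits {1..n} (sp_abs ?\<pi>') = insert (?Oi \<union> ?Oj) R"
    unfolding sp_abs_swap[OF e] R_def by (rule orbits_comp_transpose_join[OF f ij])
  have orbits: "orbits {1..n} ?f = insert ?Oi (insert ?Oj R)"
    using ij(1,2) unfolding R_def orbits_def by auto
  have M_sub: "?Oi \<union> ?Oj \<subseteq> {1..n}"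
    using iter_orbit_sp_abs_subset[OF \<pi>] ij(1,2) by blast
  have "counted_cycle ?\<pi>' (?Oi \<union> ?Oj) = counted_cycle \<pi> (?Oi \<union> ?Oj)"
    unfolding counted_cycle_def
    using sign_prod_swap[OF finite_subset[OF M_sub] _ _ \<open>i \<noteq> j\<close> e] iter_orbit_self[of i ?f]
      iter_orbit_self[of j ?f] by simp
  moreover have "{C \<in> R. counted_cycle ?\<pi>' C} = {C \<in> R. counted_cycle \<pi> C}"
    using R_avoid by (intro Collect_cong conj_cong refl counted_cycle_cong) auto
  ultimately have "cyc_plus n ?\<pi>' = of_bool (counted_cycle \<pi> (?Oi \<union> ?Oj)) + card {C \<in> R. counted_cycle \<pi> C}"
    unfolding cyc_plus_def counted_cycles_def orbits' card_Collect_insert[OF finR M_notin] by simp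
  moreover have "cyc_plus n \<pi> = of_bool (counted_cycle \<pi> ?Oi) + of_bool (counted_cycle \<pi> ?Oj)
      + card {C \<in> R. counted_cycle \<pi> C}"
  proof -
    have "?Oj \<notin> R" "?Oi \<notin> insert ?Oj R" using Oi_Oj unfolding R_def by auto
    then show ?thesis unfolding cyc_plus_def counted_cycles_def orbits
      using finR card_Collect_insert[of "insert ?Oj R" ?Oi] card_Collect_insert[of R ?Oj] by simp
  qed
  ultimately show ?thesis by simp
qed

lemma cyc_plus_mult_TD:
  assumes \<pi>: "\<pi> \<in> signed_perms n" and g: "g \<in> TD n"
  shows "cyc_plus n \<pi> \<le> Suc (cyc_plus n (sp_mult n \<pi> g))"
proof -
  let ?f = "sp_abs \<pi>"
  have f: "bij_betw ?f {1..n} {1..n}" "finite {1..n}" using signed_perms_bij[OF \<pi>] by auto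
  show ?thesis
  proof (cases rule: sp_mult_TD_cases[OF \<pi> g, case_names swap flip])
    case (swap i j e)
    have ij: "i \<in> {1..n}" "j \<in> {1..n}" using swap(1-3) by auto
    show ?thesis
    proof (cases "j \<in> iter_orbit ?f i")
      case True
      then show ?thesis using cyc_plus_swap_same_cycle[OF \<pi> ij(1) True swap(4)] swap(5) by simp
    next
      case False
      have sub: "iter_orbit ?f i \<subseteq> {1..n}" "iter_orbit ?f j \<subseteq> {1..n}"
        using iter_orbit_sp_abs_subset[OF \<pi>] ij by blast+
      have "counted_cycle \<pi> (iter_orbit ?f i \<union> iter_orbit ?f j)"
        if "counted_cycle \<pi> (iter_orbit ?f i)" "counted_cycle \<pi> (iter_orbit ?f j)"
        using counted_cycle_union[OF finite_subset[OF sub(1)] finite_subset[OF sub(2)]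
            iter_orbit_disjoint[OF f ij False] that] by simp
      then show ?thesis using cyc_plus_swap_join[OF \<pi> ij False swap(4)] swap(5)
        by (auto simp: of_bool_def split: if_splits)
    qed
  next
    case (flip i)
    let ?\<pi>' = "\<pi>(1 := - \<pi> 1, i := - \<pi> i)"
    \<comment> \<open>Only the cycle through \<open>i\<close> may stop being counted: the one through \<open>1\<close> is counted anyway.\<close>
    show ?thesis unfolding flip(3)
    proof (rule cyc_plus_le_Suc[of _ _ "iter_orbit ?f i"], rule subsetI)
      fix C assume "C \<in> counted_cycles n \<pi> - {iter_orbit ?f i}"
      then have C: "C \<in> orbits {1..n} ?f" "C \<noteq> iter_orbit ?f i" "counted_cycle \<pi> C"
        unfolding counted_cycles_def by auto
      have "i \<notin> C" by (rule notin_other_orbit[OF f C(1,2)])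
      have "counted_cycle ?\<pi>' C"
      proof (cases "1 \<in> C")
        case False
        then have "counted_cycle ?\<pi>' C = counted_cycle \<pi> C"
          using \<open>i \<notin> C\<close> by (intro counted_cycle_cong) auto
        with C(3) show ?thesis by simp
      qed (simp add: counted_cycle_def)
      then show "C \<in> counted_cycles n ?\<pi>'" using C(1) by (simp add: counted_cycles_def sp_abs_flip)
    qed
  qed
qed

lemma cyc_plus_sp_id: "cyc_plus n (sp_id n) = n"
proof -
  let ?f = "sp_abs (sp_id n)"
  have orbit: "iter_orbit ?f x = {x}" if "x \<in> {1..n}" for x
    using iter_orbit_least[of x "{x}" ?f] iter_orbit_self[of x ?f] that
    by (auto simp: sp_abs_def sp_id_def)
  have "sign_prod (sp_id n) {x} = 1" if "x \<in> {1..n}" for x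
    using that by (simp add: sign_prod_def sp_id_def)
  then have "counted_cycles n (sp_id n) = (\<lambda>x. {x}) ` {1..n}"
    using orbit unfolding counted_cycles_def counted_cycle_def orbits_def by auto
  then show ?thesis unfolding cyc_plus_def by (simp add: card_image)
qed

lemma length_TD_word_lower_bound:
  "set ws \<subseteq> TD n \<Longrightarrow> n \<le> cyc_plus n (foldl (sp_mult n) (sp_id n) ws) + length ws"
proof (induction ws rule: rev_induct)
  case (snoc g ws)
  then have "foldl (sp_mult n) (sp_id n) ws \<in> signed_perms n"
    using word_product_Dn Dn_signed_perms by auto
  with snoc show ?case using cyc_plus_mult_TD[of _ n g] by fastforce
qed (simp add: cyc_plus_sp_id)

section \<open>Inserting the letter n + 1\<close>

definition sp_extend :: "nat \<Rightarrow> (nat \<Rightarrow> int) \<Rightarrow> nat \<Rightarrow> int" where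
  "sp_extend n \<pi> = \<pi>(Suc n := int (Suc n))"

lemma sp_abs_sp_extend: "sp_abs (sp_extend n \<pi>) = (sp_abs \<pi>)(Suc n := Suc n)"
  by (auto simp: sp_abs_def sp_extend_def fun_eq_iff)

lemma sp_extend_signed_perms:
  assumes \<pi>: "\<pi> \<in> signed_perms n"
  shows "sp_extend n \<pi> \<in> signed_perms (Suc n)"
proof (rule signed_permsI)
  have "bij_betw ((sp_abs \<pi>)(Suc n := Suc n)) {1..n} {1..n}"
    using signed_perms_bij[OF \<pi>] by (rule bij_betw_cong[THEN iffD1, rotated]) auto
  then have "bij_betw ((sp_abs \<pi>)(Suc n := Suc n)) ({1..n} \<union> {Suc n}) ({1..n} \<union> {Suc n})"
    by (rule bij_betw_combine) auto
  moreover have "{1..n} \<union> {Suc n} = {1..Suc n}" by auto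
  ultimately show "bij_betw (sp_abs (sp_extend n \<pi>)) {1..Suc n} {1..Suc n}"
    unfolding sp_abs_sp_extend by simp
qed (use signed_perms_outside[OF \<pi>] in \<open>auto simp: sp_extend_def\<close>)

lemma sign_prod_sp_extend:
  "sign_prod (sp_extend n \<pi>) {1..Suc n} = sign_prod \<pi> {1..n}"
proof -
  have "sign_prod (sp_extend n \<pi>) {1..n} = sign_prod \<pi> {1..n}"
    by (rule sign_prod_cong) (simp add: sp_extend_def)
  then show ?thesis by (simp add: sign_prod_def atLeastAtMostSuc_conv sp_extend_def)
qed

lemma sp_extend_Dn: "\<pi> \<in> Dn n \<Longrightarrow> sp_extend n \<pi> \<in> Dn (Suc n)"
  using sp_extend_signed_perms sign_prod_sp_extend by (simp add: Dn_iff_sign_prod)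

lemma restrict_sp_extend: "\<pi> \<in> signed_perms n \<Longrightarrow> (sp_extend n \<pi>)(Suc n := 0) = \<pi>"
  using signed_perms_outside[of \<pi> n "Suc n"] by (auto simp: sp_extend_def fun_eq_iff)

lemma sp_extend_restrict: "y (Suc n) = int (Suc n) \<Longrightarrow> sp_extend n (y(Suc n := 0)) = y"
  by (auto simp: sp_extend_def fun_eq_iff)

lemma restrict_Dn:
  assumes y: "y \<in> Dn (Suc n)" and yN: "y (Suc n) = int (Suc n)"
  shows "y(Suc n := 0) \<in> Dn n"
proof -
  let ?N = "Suc n" and ?y' = "y(Suc n := 0)"
  have yS: "y \<in> signed_perms ?N" using y by (rule Dn_signed_perms)
  have f: "bij_betw (sp_abs y) {1..?N} {1..?N}" by (rule signed_perms_bij[OF yS])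
  have fN: "sp_abs y ?N = ?N" using yN by (simp add: sp_abs_def)
  have N: "{1..n} = {1..?N} - {?N}" by auto
  have "sp_abs y ` ({1..?N} - {?N}) = sp_abs y ` {1..?N} - sp_abs y ` {?N}"
    by (rule inj_on_image_set_diff[OF bij_betw_imp_inj_on[OF f]]) auto
  then have "sp_abs y ` {1..n} = {1..n}" using bij_betw_imp_surj_on[OF f] fN N by simp
  then have "bij_betw (sp_abs y) {1..n} {1..n}" by (intro bij_betw_subset[OF f]) auto
  moreover have "sp_abs ?y' k = sp_abs y k" if "k \<in> {1..n}" for k using that by (simp add: sp_abs_def)
  ultimately have "bij_betw (sp_abs ?y') {1..n} {1..n}" using bij_betw_cong by metis
  then have "?y' \<in> signed_perms n"
    by (rule signed_permsI) (use signed_perms_outside[OF yS] in \<open>auto\<close>)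
  moreover have "sign_prod ?y' {1..n} = 1"
    using sign_prod_sp_extend[of n ?y'] y sp_extend_restrict[of y n, OF yN] by (simp add: Dn_iff_sign_prod)
  ultimately show ?thesis by (simp add: Dn_iff_sign_prod)
qed

lemma sp_extend_TD:
  assumes "g \<in> TD n"
  shows "sp_extend n g \<in> TD (Suc n)"
  using assms[unfolded TD_def]
proof (elim UnE CollectE exE conjE)
  fix i j assume "g = tD_pos n i j" "1 \<le> i" "i < j" "j \<le> n"
  moreover have "sp_extend n (tD_pos n i j) = tD_pos (Suc n) i j"
    using \<open>i < j\<close> \<open>j \<le> n\<close> by (auto simp: sp_extend_def tD_pos_def fun_eq_iff)
  ultimately show ?thesis by (simp add: tD_pos_in_TD)
next
  fix i j assume "g = tD_neg n i j" "1 \<le> i" "i < j" "j \<le> n"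
  moreover have "sp_extend n (tD_neg n i j) = tD_neg (Suc n) i j"
    using \<open>i < j\<close> \<open>j \<le> n\<close> by (auto simp: sp_extend_def tD_neg_def fun_eq_iff)
  ultimately show ?thesis by (simp add: tD_neg_in_TD)
next
  fix i assume "g = tD_bar n i" "1 < i" "i \<le> n"
  moreover have "sp_extend n (tD_bar n i) = tD_bar (Suc n) i"
    using \<open>1 < i\<close> \<open>i \<le> n\<close> by (auto simp: sp_extend_def tD_bar_def fun_eq_iff)
  ultimately show ?thesis by (simp add: tD_bar_in_TD)
qed

lemma sp_extend_sp_mult:
  assumes g: "g \<in> signed_perms n"
  shows "sp_extend n (sp_mult n \<pi> g) = sp_mult (Suc n) (sp_extend n \<pi>) (sp_extend n g)"
proof
  fix k
  show "sp_extend n (sp_mult n \<pi> g) k = sp_mult (Suc n) (sp_extend n \<pi>) (sp_extend n g) k"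
  proof (cases "k \<in> {1..n}")
    case True
    then have "nat \<bar>g k\<bar> \<noteq> Suc n" using signed_perms_abs_in[OF g True] by (auto simp: sp_abs_def)
    then show ?thesis using True by (auto simp: sp_extend_def sp_mult_def)
  qed (auto simp: sp_extend_def sp_mult_def)
qed

lemma word_product_sp_extend:
  "set ws \<subseteq> TD n \<Longrightarrow>
    foldl (sp_mult (Suc n)) (sp_id (Suc n)) (map (sp_extend n) ws) = sp_extend n (foldl (sp_mult n) (sp_id n) ws)"
proof (induction ws rule: rev_induct)
  case Nil
  show ?case by (auto simp: sp_extend_def sp_id_def fun_eq_iff)
next
  case (snoc g ws)
  then have "g \<in> signed_perms n" using TD_Dn Dn_signed_perms by auto
  with snoc show ?case by (simp add: sp_extend_sp_mult)
qed

lemma iter_orbit_sp_extend: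
  assumes \<pi>: "\<pi> \<in> signed_perms n" and x: "x \<in> {1..n}"
  shows "iter_orbit (sp_abs (sp_extend n \<pi>)) x = iter_orbit (sp_abs \<pi>) x"
proof (rule iter_orbit_cong)
  fix y assume "y \<in> iter_orbit (sp_abs \<pi>) x"
  then have "y \<in> {1..n}" using iter_orbit_sp_abs_subset[OF \<pi> x] by blast
  then show "sp_abs (sp_extend n \<pi>) y = sp_abs \<pi> y" unfolding sp_abs_sp_extend by simp
qed

lemma iter_orbit_sp_extend_Suc: "iter_orbit (sp_abs (sp_extend n \<pi>)) (Suc n) = {Suc n}"
proof -
  have "iter_orbit (sp_abs (sp_extend n \<pi>)) (Suc n) \<subseteq> {Suc n}"
    by (rule iter_orbit_least) (auto simp: sp_abs_sp_extend)
  then show ?thesis using iter_orbit_self[of "Suc n" "sp_abs (sp_extend n \<pi>)"] by blast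
qed

lemma orbits_sp_extend:
  assumes "\<pi> \<in> signed_perms n"
  shows "orbits {1..Suc n} (sp_abs (sp_extend n \<pi>)) = insert {Suc n} (orbits {1..n} (sp_abs \<pi>))"
proof -
  have "{1..Suc n} = insert (Suc n) {1..n}" by auto
  then show ?thesis
    unfolding orbits_def using iter_orbit_sp_extend[OF assms] iter_orbit_sp_extend_Suc by simp
qed

lemma cyc_plus_sp_extend:
  assumes \<pi>: "\<pi> \<in> signed_perms n"
  shows "cyc_plus (Suc n) (sp_extend n \<pi>) = Suc (cyc_plus n \<pi>)"
proof -
  note sub = orbits_sp_abs_subset[OF \<pi>]
  have "counted_cycle (sp_extend n \<pi>) C = counted_cycle \<pi> C" if "C \<in> orbits {1..n} (sp_abs \<pi>)" for C
    using sub[OF that] by (intro counted_cycle_cong) (auto simp: sp_extend_def)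
  moreover have "counted_cycle (sp_extend n \<pi>) {Suc n}"
    by (simp add: counted_cycle_def sign_prod_def sp_extend_def)
  ultimately have "counted_cycles (Suc n) (sp_extend n \<pi>) = insert {Suc n} (counted_cycles n \<pi>)"
    unfolding counted_cycles_def orbits_sp_extend[OF \<pi>] by auto
  moreover have "{Suc n} \<notin> counted_cycles n \<pi>" using sub[of "{Suc n}"] unfolding counted_cycles_def by auto
  ultimately show ?thesis unfolding cyc_plus_def by (simp add: finite_counted_cycles)
qed

text \<open>The \<open>2(n + 1)\<close> ways of inserting the letter \<open>n + 1\<close>: keep it fixed (\<open>r = 0\<close>), bar it
  together with the letter in position \<open>1\<close> (\<open>r = 1\<close>), or exchange it with the letter in
  position \<open>k\<close> by \<open>t\<^sup>D\<^sub>k\<^sub>,\<^sub>n\<^sub>+\<^sub>1\<close> (\<open>r = 2k\<close>) or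
  \<open>t\<^sup>D\<^sub>-\<^sub>k\<^sub>,\<^sub>n\<^sub>+\<^sub>1\<close> (\<open>r = 2k + 1\<close>).\<close>

definition insertion_gen :: "nat \<Rightarrow> nat \<Rightarrow> nat \<Rightarrow> int" where
  "insertion_gen N r = (if r = 0 then sp_id N else if r = 1 then tD_bar N N
     else if even r then tD_pos N (r div 2) N else tD_neg N (r div 2) N)"

definition sp_insert :: "nat \<Rightarrow> (nat \<Rightarrow> int) \<Rightarrow> nat \<Rightarrow> nat \<Rightarrow> int" where
  "sp_insert n \<pi> r = sp_mult (Suc n) (sp_extend n \<pi>) (insertion_gen (Suc n) r)"

lemma insertion_gen_TD:
  assumes "1 \<le> n" "0 < r" "r < 2 * Suc n"
  shows "insertion_gen (Suc n) r \<in> TD (Suc n)"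
proof -
  have "r = 1 \<or> 1 \<le> r div 2 \<and> r div 2 < Suc n" using assms(2,3) by auto
  then show ?thesis using assms(1)
    by (auto simp: insertion_gen_def tD_pos_in_TD tD_neg_in_TD tD_bar_in_TD)
qed

lemma insertion_gen_involutive:
  assumes "x \<in> signed_perms (Suc n)" "1 \<le> n" "r < 2 * Suc n"
  shows "sp_mult (Suc n) (sp_mult (Suc n) x (insertion_gen (Suc n) r)) (insertion_gen (Suc n) r) = x"
proof (cases "r = 0")
  case True
  then show ?thesis using assms(1) by (simp add: insertion_gen_def sp_mult_sp_id)
next
  case False
  then show ?thesis using sp_mult_TD_involutive[OF assms(1) insertion_gen_TD[OF assms(2) _ assms(3)]] by simp
qed

lemma sp_insert_cases:
  assumes \<pi>: "\<pi> \<in> signed_perms n" and "1 \<le> n" "r < 2 * Suc n"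
  defines "E \<equiv> sp_extend n \<pi>"
  obtains (fixed) "r = 0" "sp_insert n \<pi> r = E"
    | (flip) "r = 1" "sp_insert n \<pi> r = E(1 := - E 1, Suc n := - E (Suc n))"
    | (swap) k e where "1 \<le> k" "k \<le> n" "\<bar>e\<bar> = 1" "r = 2 * k + of_bool (e = -1)"
        "sp_insert n \<pi> r = E(k := e * E (Suc n), Suc n := e * E k)"
proof -
  have E: "E \<in> signed_perms (Suc n)" unfolding E_def by (rule sp_extend_signed_perms[OF \<pi>])
  consider "r = 0" | "r = 1" | "r \<ge> 2" "even r" | "r \<ge> 2" "odd r" by linarith
  then show thesis
  proof cases
    case 1 then show thesis using fixed sp_mult_sp_id[OF E] by (simp add: sp_insert_def insertion_gen_def E_def)
  next
    case 2 then show thesis using flip sp_mult_tD_bar[OF E] assms(2)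
      by (simp add: sp_insert_def insertion_gen_def E_def)
  next
    case 3
    then have "1 \<le> r div 2" "r div 2 \<le> n" "r = 2 * (r div 2) + of_bool (1 = (-1::int))"
      using assms(3) by auto
    moreover have "insertion_gen (Suc n) r = tD_pos (Suc n) (r div 2) (Suc n)"
      using 3 by (simp add: insertion_gen_def)
    ultimately show thesis using swap[of "r div 2" 1] sp_mult_tD_pos[OF E, of "r div 2" "Suc n"]
      by (simp add: sp_insert_def E_def)
  next
    case 4
    then have "1 \<le> r div 2" "r div 2 \<le> n" "r = 2 * (r div 2) + of_bool (- 1 = (-1::int))"
      using assms(3) by auto
    moreover have "insertion_gen (Suc n) r = tD_neg (Suc n) (r div 2) (Suc n)"
      using 4 by (simp add: insertion_gen_def)
    ultimately show thesis using swap[of "r div 2" "-1"] sp_mult_tD_neg[OF E, of "r div 2" "Suc n"]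
      by (simp add: sp_insert_def E_def)
  qed
qed

lemma sp_insert_undo:
  assumes "\<pi> \<in> signed_perms n" "1 \<le> n" "r < 2 * Suc n"
  shows "sp_mult (Suc n) (sp_insert n \<pi> r) (insertion_gen (Suc n) r) = sp_extend n \<pi>"
  unfolding sp_insert_def by (rule insertion_gen_involutive[OF sp_extend_signed_perms[OF assms(1)] assms(2,3)])

lemma cyc_plus_sp_insert:
  assumes \<pi>: "\<pi> \<in> signed_perms n" and n: "1 \<le> n" and r: "r < 2 * Suc n"
  shows "cyc_plus (Suc n) (sp_insert n \<pi> r) = cyc_plus n \<pi> + of_bool (r = 0)"
proof -
  let ?N = "Suc n" and ?E = "sp_extend n \<pi>"
  have E: "?E \<in> signed_perms ?N" by (rule sp_extend_signed_perms[OF \<pi>])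
  note sub = orbits_sp_abs_subset[OF \<pi>]
  show ?thesis
  proof (cases rule: sp_insert_cases[OF \<pi> n r, case_names fixed flip swap])
    case fixed
    then show ?thesis using cyc_plus_sp_extend[OF \<pi>] by simp
  next
    case flip
    \<comment> \<open>\<open>{n + 1}\<close> becomes a cycle with one bar; all other cycles keep their status.\<close>
    let ?\<pi>' = "?E(1 := - ?E 1, ?N := - ?E ?N)"
    have "counted_cycle ?\<pi>' C = counted_cycle \<pi> C" if "C \<in> orbits {1..n} (sp_abs \<pi>)" for C
    proof (cases "1 \<in> C")
      case False
      with sub[OF that] show ?thesis by (intro counted_cycle_cong) (auto simp: sp_extend_def)
    qed (simp add: counted_cycle_def)
    moreover have "\<not> counted_cycle ?\<pi>' {?N}"
      using n by (simp add: counted_cycle_def sign_prod_def sp_extend_def)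
    ultimately have "counted_cycles ?N ?\<pi>' = counted_cycles n \<pi>"
      unfolding counted_cycles_def sp_abs_flip orbits_sp_extend[OF \<pi>] by auto
    then show ?thesis using flip unfolding cyc_plus_def by simp
  next
    case (swap k e)
    \<comment> \<open>The counted fixed point \<open>n + 1\<close> is joined to the cycle through \<open>k\<close>, which keeps its status.\<close>
    let ?O = "iter_orbit (sp_abs ?E) k"
    have k: "k \<in> {1..?N}" "?N \<in> {1..?N}" using swap(1,2) by auto
    have "?O \<subseteq> {1..n}"
      using iter_orbit_sp_extend[OF \<pi>, of k] iter_orbit_sp_abs_subset[OF \<pi>, of k] swap(1,2) by simp
    then have N_notin: "?N \<notin> ?O" by auto
    have "sign_prod ?E (?O \<union> {?N}) = sign_prod ?E ?O"
      using N_notin finite_subset[OF \<open>?O \<subseteq> {1..n}\<close>] by (simp add: sign_prod_def sp_extend_def)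
    then have "counted_cycle ?E (?O \<union> {?N}) = counted_cycle ?E ?O"
      using n unfolding counted_cycle_def by auto
    moreover have "counted_cycle ?E {?N}" by (simp add: counted_cycle_def sign_prod_def sp_extend_def)
    ultimately show ?thesis
      using cyc_plus_swap_join[OF E k N_notin swap(3)] iter_orbit_sp_extend_Suc[of n \<pi>]
        cyc_plus_sp_extend[OF \<pi>] swap(1,4,5) by simp
  qed
qed

lemma sp_insert_Dn:
  assumes \<pi>: "\<pi> \<in> Dn n" and n: "1 \<le> n" and r: "r < 2 * Suc n"
  shows "sp_insert n \<pi> r \<in> Dn (Suc n)"
proof (cases "r = 0")
  case True
  then show ?thesis using sp_extend_Dn[OF \<pi>] Dn_signed_perms[OF sp_extend_Dn[OF \<pi>]]
    by (simp add: sp_insert_def insertion_gen_def sp_mult_sp_id)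
next
  case False
  then show ?thesis unfolding sp_insert_def
    using sp_mult_TD_Dn[OF sp_extend_Dn[OF \<pi>] insertion_gen_TD[OF n _ r]] by simp
qed

definition insertion_index :: "nat \<Rightarrow> (nat \<Rightarrow> int) \<Rightarrow> nat" where
  "insertion_index N x = (let p = THE p. p \<in> {1..N} \<and> sp_abs x p = N in
     (if p = N then 0 else 2 * p) + of_bool (x p < 0))"

lemma position_of_letter:
  assumes "x \<in> signed_perms N" "p \<in> {1..N}" "sp_abs x p = m"
  shows "(THE p. p \<in> {1..N} \<and> sp_abs x p = m) = p"
proof (rule the_equality)
  fix q assume "q \<in> {1..N} \<and> sp_abs x q = m"
  then show "q = p"
    using assms inj_onD[OF bij_betw_imp_inj_on[OF signed_perms_bij[OF assms(1)]]] by metis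
qed (use assms in simp)

lemma insertion_index_sp_insert:
  assumes \<pi>: "\<pi> \<in> Dn n" and n: "1 \<le> n" and r: "r < 2 * Suc n"
  shows "insertion_index (Suc n) (sp_insert n \<pi> r) = r"
proof -
  let ?N = "Suc n" and ?E = "sp_extend n \<pi>" and ?x = "sp_insert n \<pi> r"
  have x: "?x \<in> signed_perms ?N" using sp_insert_Dn[OF assms] by (rule Dn_signed_perms)
  have \<pi>': "\<pi> \<in> signed_perms n" using \<pi> by (rule Dn_signed_perms)
  have E: "?E ?N = int ?N" by (simp add: sp_extend_def)
  have index: "insertion_index ?N ?x = (if p = ?N then 0 else 2 * p) + of_bool (?x p < 0)"
    if "p \<in> {1..?N}" "sp_abs ?x p = ?N" for p
    unfolding insertion_index_def using position_of_letter[OF x that] by simp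
  show ?thesis
  proof (cases rule: sp_insert_cases[OF \<pi>' n r, case_names fixed flip swap])
    case fixed
    then show ?thesis using index[of ?N] E by (simp add: sp_abs_def)
  next
    case flip
    then show ?thesis using index[of ?N] E n by (simp add: sp_abs_def)
  next
    case (swap k e)
    have "?x k = e * int ?N" using swap(2,5) E by simp
    moreover have "e = 1 \<or> e = -1" using swap(3) by auto
    ultimately have "sp_abs ?x k = ?N" "(?x k < 0) = (e = -1)" by (auto simp: sp_abs_def)
    then show ?thesis using index[of k] swap(1,2,4) by simp
  qed
qed

lemma insertion_index_inverse:
  assumes x: "x \<in> signed_perms (Suc n)" and n: "1 \<le> n"
  defines "r \<equiv> insertion_index (Suc n) x"
  shows "r < 2 * Suc n" "sp_mult (Suc n) x (insertion_gen (Suc n) r) (Suc n) = int (Suc n)"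
proof -
  let ?N = "Suc n"
  have "?N \<in> sp_abs x ` {1..?N}" using bij_betw_imp_surj_on[OF signed_perms_bij[OF x]] by simp
  then obtain p where p: "p \<in> {1..?N}" "sp_abs x p = ?N" by (metis imageE)
  have r: "r = (if p = ?N then 0 else 2 * p) + of_bool (x p < 0)"
    unfolding r_def insertion_index_def using position_of_letter[OF x p] by simp
  have xp: "x p = int ?N \<or> x p = - int ?N" using p(2) unfolding sp_abs_def by linarith
  show "r < 2 * Suc n" using r p(1) by auto
  show "sp_mult ?N x (insertion_gen ?N r) ?N = int ?N"
  proof (cases "p = ?N")
    case True
    show ?thesis
    proof (cases "x p < 0")
      case False
      then have "insertion_gen ?N r = sp_id ?N" using True r by (simp add: insertion_gen_def)
      then show ?thesis using sp_mult_sp_id[OF x] True False xp by simp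
    next
      case neg: True
      then have "insertion_gen ?N r = tD_bar ?N ?N" using True r by (simp add: insertion_gen_def)
      then show ?thesis using sp_mult_tD_bar[OF x, of ?N] n True neg xp by simp
    qed
  next
    case False
    then have p': "1 \<le> p" "p < ?N" using p(1) by auto
    show ?thesis
    proof (cases "x p < 0")
      case False
      then have "insertion_gen ?N r = tD_pos ?N p ?N" using p' r by (simp add: insertion_gen_def)
      then show ?thesis using sp_mult_tD_pos[OF x p' le_refl] p' False xp by simp
    next
      case True
      then have "insertion_gen ?N r = tD_neg ?N p ?N" using p' r by (simp add: insertion_gen_def)
      then show ?thesis using sp_mult_tD_neg[OF x p' le_refl] p' True xp by simp
    qed
  qed
qed

lemma sp_insert_bij:
  assumes n: "1 \<le> n"
  shows "bij_betw (\<lambda>(\<pi>, r). sp_insert n \<pi> r) (Dn n \<times> {..<2 * Suc n}) (Dn (Suc n))"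
proof (rule bij_betw_imageI)
  note SP = Dn_signed_perms
  show "inj_on (\<lambda>(\<pi>, r). sp_insert n \<pi> r) (Dn n \<times> {..<2 * Suc n})"
  proof (rule inj_onI, clarify)
    fix \<pi>1 r1 \<pi>2 r2
    assume \<pi>: "\<pi>1 \<in> Dn n" "\<pi>2 \<in> Dn n" and r: "r1 < 2 * Suc n" "r2 < 2 * Suc n"
      and eq: "sp_insert n \<pi>1 r1 = sp_insert n \<pi>2 r2"
    have "r1 = r2" using insertion_index_sp_insert[OF \<pi>(1) n r(1)] insertion_index_sp_insert[OF \<pi>(2) n r(2)]
      eq by simp
    then have "sp_extend n \<pi>1 = sp_extend n \<pi>2"
      using sp_insert_undo[OF SP[OF \<pi>(1)] n r(1)] sp_insert_undo[OF SP[OF \<pi>(2)] n r(2)] eq by simp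
    then show "\<pi>1 = \<pi>2 \<and> r1 = r2"
      using restrict_sp_extend[OF SP[OF \<pi>(1)]] restrict_sp_extend[OF SP[OF \<pi>(2)]] \<open>r1 = r2\<close> by metis
  qed
  show "(\<lambda>(\<pi>, r). sp_insert n \<pi> r) ` (Dn n \<times> {..<2 * Suc n}) = Dn (Suc n)"
  proof (intro equalityI subsetI)
    fix x assume "x \<in> (\<lambda>(\<pi>, r). sp_insert n \<pi> r) ` (Dn n \<times> {..<2 * Suc n})"
    then show "x \<in> Dn (Suc n)" using sp_insert_Dn[OF _ n] by auto
  next
    fix x assume x: "x \<in> Dn (Suc n)"
    define r where "r = insertion_index (Suc n) x"
    define y where "y = sp_mult (Suc n) x (insertion_gen (Suc n) r)"
    have r: "r < 2 * Suc n" and yN: "y (Suc n) = int (Suc n)"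
      using insertion_index_inverse[OF SP[OF x] n] unfolding r_def y_def by auto
    have "y \<in> Dn (Suc n)"
    proof (cases "r = 0")
      case True
      then show ?thesis using x SP[OF x] by (simp add: y_def insertion_gen_def sp_mult_sp_id)
    next
      case False
      then show ?thesis unfolding y_def using sp_mult_TD_Dn[OF x insertion_gen_TD[OF n _ r]] by simp
    qed
    then have "y(Suc n := 0) \<in> Dn n" using yN by (rule restrict_Dn)
    moreover have "sp_insert n (y(Suc n := 0)) r = x"
    proof -
      have "sp_insert n (y(Suc n := 0)) r = sp_mult (Suc n) y (insertion_gen (Suc n) r)"
        unfolding sp_insert_def sp_extend_restrict[of y n, OF yN] ..
      also have "\<dots> = x" unfolding y_def by (rule insertion_gen_involutive[OF SP[OF x] n r])
      finally show ?thesis .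
    qed
    ultimately show "x \<in> (\<lambda>(\<pi>, r). sp_insert n \<pi> r) ` (Dn n \<times> {..<2 * Suc n})"
      using r by (auto intro!: image_eqI[of _ _ "(y(Suc n := 0), r)"])
  qed
qed

section \<open>The generating function\<close>

lemma sum_sp_insert:
  fixes a b :: "'a :: comm_ring_1"
  assumes \<pi>: "\<pi> \<in> signed_perms n" and n: "1 \<le> n"
  shows "(\<Sum>r<2 * Suc n. a ^ cyc_plus (Suc n) (sp_insert n \<pi> r) * b ^ (Suc n - cyc_plus (Suc n) (sp_insert n \<pi> r)))
    = (a + of_nat (2 * Suc n - 1) * b) * (a ^ cyc_plus n \<pi> * b ^ (n - cyc_plus n \<pi>))"
proof -
  define c where "c = cyc_plus n \<pi>"
  have c: "c \<le> n" unfolding c_def by (rule cyc_plus_le)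
  let ?F = "\<lambda>r. a ^ cyc_plus (Suc n) (sp_insert n \<pi> r) * b ^ (Suc n - cyc_plus (Suc n) (sp_insert n \<pi> r))"
  have "(\<Sum>r<2 * Suc n. ?F r) = ?F 0 + (\<Sum>r<2 * n + 1. ?F (Suc r))"
    using sum.lessThan_Suc_shift[of ?F "2 * n + 1"] by simp
  also have "?F 0 = a ^ Suc c * b ^ (n - c)"
    using cyc_plus_sp_insert[OF \<pi> n, of 0] by (simp add: c_def)
  also have "(\<Sum>r<2 * n + 1. ?F (Suc r)) = (\<Sum>r<2 * n + 1. a ^ c * b ^ Suc (n - c))"
    using cyc_plus_sp_insert[OF \<pi> n] c by (intro sum.cong) (simp_all add: c_def Suc_diff_le)
  also have "a ^ Suc c * b ^ (n - c) + (\<Sum>r<2 * n + 1. a ^ c * b ^ Suc (n - c))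
      = (a + of_nat (2 * Suc n - 1) * b) * (a ^ c * b ^ (n - c))"
    by (simp add: algebra_simps)
  finally show ?thesis unfolding c_def .
qed

lemma generating_function:
  fixes a b :: "'a :: comm_ring_1"
  assumes "1 \<le> n"
  shows "(\<Sum>\<pi>\<in>Dn n. a ^ cyc_plus n \<pi> * b ^ (n - cyc_plus n \<pi>)) = a * (\<Prod>i=2..n. a + of_nat (2 * i - 1) * b)"
  using assms
proof (induction n rule: nat_induct_at_least)
  case base
  have "Dn (Suc 0) = {sp_id (Suc 0)}" using Dn_1 by simp
  then show ?case using cyc_plus_sp_id[of 1] by simp
next
  case (Suc n)
  let ?F = "\<lambda>\<pi>. a ^ cyc_plus (Suc n) \<pi> * b ^ (Suc n - cyc_plus (Suc n) \<pi>)"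
  have "(\<Sum>\<pi>\<in>Dn (Suc n). ?F \<pi>) = (\<Sum>p\<in>Dn n \<times> {..<2 * Suc n}. ?F ((\<lambda>(\<pi>, r). sp_insert n \<pi> r) p))"
    by (rule sum.reindex_bij_betw[OF sp_insert_bij[OF Suc(1)], symmetric])
  also have "\<dots> = (\<Sum>\<pi>\<in>Dn n. \<Sum>r<2 * Suc n. ?F (sp_insert n \<pi> r))"
    by (subst sum.cartesian_product) (rule sum.cong, auto)
  also have "\<dots> = (\<Sum>\<pi>\<in>Dn n. (a + of_nat (2 * Suc n - 1) * b) * (a ^ cyc_plus n \<pi> * b ^ (n - cyc_plus n \<pi>)))"
    by (rule sum.cong[OF refl]) (rule sum_sp_insert[OF Dn_signed_perms Suc(1)])
  also have "\<dots> = (a + of_nat (2 * Suc n - 1) * b) * (\<Sum>\<pi>\<in>Dn n. a ^ cyc_plus n \<pi> * b ^ (n - cyc_plus n \<pi>))"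
    by (simp only: sum_distrib_left)
  finally show ?case using Suc by (simp add: prod.cl_ivl_Suc mult_ac)
qed

section \<open>The reflection length\<close>

lemma TD_word_of_length:
  assumes "1 \<le> n" "\<pi> \<in> Dn n"
  obtains ws where "set ws \<subseteq> TD n" "foldl (sp_mult n) (sp_id n) ws = \<pi>" "length ws = n - cyc_plus n \<pi>"
  using assms
proof (induction n arbitrary: \<pi> thesis rule: nat_induct_at_least)
  case base
  then have "\<pi> = sp_id 1" using Dn_1 by simp
  then show ?case using base(1)[of "[]"] cyc_plus_sp_id[of 1] by simp
next
  case (Suc n)
  have "\<pi> \<in> (\<lambda>(\<sigma>, r). sp_insert n \<sigma> r) ` (Dn n \<times> {..<2 * Suc n})"
    using bij_betw_imp_surj_on[OF sp_insert_bij[OF Suc(1)]] Suc(4) by simp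
  then obtain \<sigma> r where \<sigma>: "\<sigma> \<in> Dn n" and r: "r < 2 * Suc n" and \<pi>: "\<pi> = sp_insert n \<sigma> r"
    by auto
  have \<sigma>': "\<sigma> \<in> signed_perms n" using \<sigma> by (rule Dn_signed_perms)
  obtain ws where ws: "set ws \<subseteq> TD n" "foldl (sp_mult n) (sp_id n) ws = \<sigma>" "length ws = n - cyc_plus n \<sigma>"
    using Suc(2)[OF _ \<sigma>] by blast
  define ws' where "ws' = map (sp_extend n) ws @ (if r = 0 then [] else [insertion_gen (Suc n) r])"
  have "set ws' \<subseteq> TD (Suc n)"
    unfolding ws'_def using ws(1) sp_extend_TD insertion_gen_TD[OF Suc(1) _ r] by auto
  moreover have "foldl (sp_mult (Suc n)) (sp_id (Suc n)) ws' = \<pi>"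
    using word_product_sp_extend[OF ws(1)] ws(2) sp_mult_sp_id[OF sp_extend_signed_perms[OF \<sigma>']]
    unfolding ws'_def \<pi> sp_insert_def by (simp add: insertion_gen_def)
  moreover have "length ws' = Suc n - cyc_plus (Suc n) \<pi>"
    unfolding ws'_def \<pi> cyc_plus_sp_insert[OF \<sigma>' Suc(1) r] using ws(3) cyc_plus_le[of n \<sigma>] by auto
  ultimately show ?case by (rule Suc(3))
qed

lemma lenD_eq:
  assumes "1 \<le> n" "\<pi> \<in> Dn n"
  shows "lenD n \<pi> = n - cyc_plus n \<pi>"
  unfolding lenD_def
proof (rule Least_equality)
  obtain ws where "set ws \<subseteq> TD n" "foldl (sp_mult n) (sp_id n) ws = \<pi>" "length ws = n - cyc_plus n \<pi>"
    using TD_word_of_length[OF assms] .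
  then show "\<exists>ws. length ws = n - cyc_plus n \<pi> \<and> set ws \<subseteq> TD n \<and> foldl (sp_mult n) (sp_id n) ws = \<pi>"
    by blast
next
  fix m assume "\<exists>ws. length ws = m \<and> set ws \<subseteq> TD n \<and> foldl (sp_mult n) (sp_id n) ws = \<pi>"
  then show "n - cyc_plus n \<pi> \<le> m" using length_TD_word_lower_bound by fastforce
qed

theorem corollary6p9:
  fixes n :: nat and t :: "'a :: comm_ring_1"
  assumes "1 \<le> n"
  shows "(\<Sum>\<pi>\<in>Dn n. t ^ cycD_plus n \<pi>) = t * (\<Prod>i=2..n. t + of_nat (2 * i - 1))
       \<and> (\<Sum>\<pi>\<in>Dn n. t ^ lenD n \<pi>) = (\<Prod>i=2..n. 1 + of_nat (2 * i - 1) * t)"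
proof
  have "(\<Sum>\<pi>\<in>Dn n. t ^ cycD_plus n \<pi>) = (\<Sum>\<pi>\<in>Dn n. t ^ cyc_plus n \<pi> * 1 ^ (n - cyc_plus n \<pi>))"
    using cycD_plus_eq_cyc_plus[OF Dn_signed_perms assms] by simp
  also have "\<dots> = t * (\<Prod>i=2..n. t + of_nat (2 * i - 1) * 1)" by (rule generating_function[OF assms])
  finally show "(\<Sum>\<pi>\<in>Dn n. t ^ cycD_plus n \<pi>) = t * (\<Prod>i=2..n. t + of_nat (2 * i - 1))" by simp
  have "(\<Sum>\<pi>\<in>Dn n. t ^ lenD n \<pi>) = (\<Sum>\<pi>\<in>Dn n. 1 ^ cyc_plus n \<pi> * t ^ (n - cyc_plus n \<pi>))"
    using lenD_eq[OF assms] by simp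
  also have "\<dots> = 1 * (\<Prod>i=2..n. 1 + of_nat (2 * i - 1) * t)" by (rule generating_function[OF assms])
  finally show "(\<Sum>\<pi>\<in>Dn n. t ^ lenD n \<pi>) = (\<Prod>i=2..n. 1 + of_nat (2 * i - 1) * t)" by simp
qed

end
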